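(* Let $k\geq 4$ and let $G$ be a $(P_1+P_5)$-free graph with a $P_k$-suitable pair $(u,v)$ such that $N(u)$ is an independent set. Then $G$ has a $P_k$-witness structure $\{W(p_1),\dots,W(p_k)\}$ with $W(p_1)=\{u\}$ and $W(p_k)=\{v\}$ such that $W(p_2)\setminus N(u)$ contains a set $S$ with $|S|\le 2$ for which $N(u)\cup S$ induces a connected subgraph of $G$.
   Context: Writing $P_k=p_1\cdots p_k$, a $P_k$-witness structure of $G$ is a partition $\{W(p_1),\dots,W(p_k)\}$ of $V(G)$ into nonempty sets, each inducing a connected subgraph, such that $W(p_i)$ and $W(p_j)$ are joined by an edge iff $|i-j|=1$. A pair of non-adjacent vertices $(u,v)$ is $P_k$-suitable if $G$ has such a witness structure with $W(p_1)=\{u\}$ and $W(p_k)=\{v\}$. A graph is $H$-free if it has no induced subgraph isomorphic to $H$; $+$ denotes disjoint union. *)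

theory Defs
  imports Main
begin

definition graph :: "'a set \<Rightarrow> ('a \<Rightarrow> 'a \<Rightarrow> bool) \<Rightarrow> bool" where
  "graph V E \<longleftrightarrow> finite V \<and> (\<forall>x y. E x y \<longrightarrow> x \<in> V \<and> y \<in> V)
     \<and> (\<forall>x y. E x y \<longrightarrow> E y x) \<and> (\<forall>x. \<not> E x x)"

definition nbhd :: "'a set \<Rightarrow> ('a \<Rightarrow> 'a \<Rightarrow> bool) \<Rightarrow> 'a \<Rightarrow> 'a set" where
  "nbhd V E u = {w \<in> V. E u w}"

definition independent :: "('a \<Rightarrow> 'a \<Rightarrow> bool) \<Rightarrow> 'a set \<Rightarrow> bool" where
  "independent E S \<longleftrightarrow> (\<forall>x\<in>S. \<forall>y\<in>S. \<not> E x y)"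

definition connected_set :: "('a \<Rightarrow> 'a \<Rightarrow> bool) \<Rightarrow> 'a set \<Rightarrow> bool" where
  "connected_set E S \<longleftrightarrow> S \<noteq> {} \<and>
     (\<forall>x\<in>S. \<forall>y\<in>S. (\<lambda>a b. a \<in> S \<and> b \<in> S \<and> E a b)\<^sup>*\<^sup>* x y)"

definition induced_copy ::
  "'b set \<Rightarrow> ('b \<Rightarrow> 'b \<Rightarrow> bool) \<Rightarrow> 'a set \<Rightarrow> ('a \<Rightarrow> 'a \<Rightarrow> bool) \<Rightarrow> bool" where
  "induced_copy VH EH V E \<longleftrightarrow> (\<exists>f. inj_on f VH \<and> f ` VH \<subseteq> V \<and>
     (\<forall>x\<in>VH. \<forall>y\<in>VH. EH x y \<longleftrightarrow> E (f x) (f y)))"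

definition H_free ::
  "'b set \<Rightarrow> ('b \<Rightarrow> 'b \<Rightarrow> bool) \<Rightarrow> 'a set \<Rightarrow> ('a \<Rightarrow> 'a \<Rightarrow> bool) \<Rightarrow> bool" where
  "H_free VH EH V E \<longleftrightarrow> \<not> induced_copy VH EH V E"

definition path_V :: "nat \<Rightarrow> nat set" where "path_V n = {0..<n}"
definition path_E :: "nat \<Rightarrow> nat \<Rightarrow> bool" where
  "path_E i j \<longleftrightarrow> i = Suc j \<or> j = Suc i"

definition dunion_V :: "'a set \<Rightarrow> 'b set \<Rightarrow> ('a + 'b) set" where
  "dunion_V A B = Inl ` A \<union> Inr ` B"
fun dunion_E :: "('a \<Rightarrow> 'a \<Rightarrow> bool) \<Rightarrow> ('b \<Rightarrow> 'b \<Rightarrow> bool) \<Rightarrow> 'a + 'b \<Rightarrow> 'a + 'b \<Rightarrow> bool" where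
  "dunion_E EA EB (Inl x) (Inl y) = EA x y"
| "dunion_E EA EB (Inr x) (Inr y) = EB x y"
| "dunion_E EA EB _ _ = False"

text \<open>P_k-witness structure W(p_1),...,W(p_k), indexed by 1..k.\<close>
definition witness_structure ::
  "'a set \<Rightarrow> ('a \<Rightarrow> 'a \<Rightarrow> bool) \<Rightarrow> nat \<Rightarrow> (nat \<Rightarrow> 'a set) \<Rightarrow> bool" where
  "witness_structure V E k W \<longleftrightarrow>
     (\<Union>i\<in>{1..k}. W i) = V \<and>
     (\<forall>i\<in>{1..k}. W i \<noteq> {} \<and> connected_set E (W i)) \<and>
     (\<forall>i\<in>{1..k}. \<forall>j\<in>{1..k}. i \<noteq> j \<longrightarrow> W i \<inter> W j = {}) \<and>
     (\<forall>i\<in>{1..k}. \<forall>j\<in>{1..k}. i \<noteq> j \<longrightarrow>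
        ((\<exists>x\<in>W i. \<exists>y\<in>W j. E x y) \<longleftrightarrow> (i = Suc j \<or> j = Suc i)))"

definition suitable :: "'a set \<Rightarrow> ('a \<Rightarrow> 'a \<Rightarrow> bool) \<Rightarrow> nat \<Rightarrow> 'a \<Rightarrow> 'a \<Rightarrow> bool" where
  "suitable V E k u v \<longleftrightarrow> u \<in> V \<and> v \<in> V \<and> \<not> E u v \<and>
     (\<exists>W. witness_structure V E k W \<and> W 1 = {u} \<and> W k = {v})"

end

theory Submission
  imports Defs
begin

text \<open>Every neighbour of u lies in W(p_2), which is connected; as N(u) is independent, each
vertex of N(u) has a neighbour in M = W(p_2) - N(u) as soon as N(u) is not a singleton.
Choose a in M with the most neighbours in N(u). If a dominates N(u), take S = {a}.
Otherwise some y in N(u) misses a; a neighbour q in M of y cannot see all N(u)-neighbours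
of a (this would beat the maximality of a), so some x is adjacent to a but not to q.
Now v sees nothing of {u} \<union> W(p_2), so by (P_1+P_5)-freeness this set contains no induced
P_5: the path a x u y q forces a ~ q, and then every z missed by a is seen by q, since
otherwise q a x u z is an induced P_5. Hence S = {a, q} works.\<close>

definition induced_path :: "('a \<Rightarrow> 'a \<Rightarrow> bool) \<Rightarrow> 'a list \<Rightarrow> bool" where
  "induced_path E ps \<longleftrightarrow> distinct ps \<and>
     (\<forall>i<length ps. \<forall>j<length ps. E (ps ! i) (ps ! j) \<longleftrightarrow> i = Suc j \<or> j = Suc i)"

lemma induced_path_5I:
  assumes sym: "\<And>x y. E x y \<Longrightarrow> E y x" and irrefl: "\<And>x. \<not> E x x"
    and "E p0 p1" "E p1 p2" "E p2 p3" "E p3 p4"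
    and "\<not> E p0 p2" "\<not> E p0 p3" "\<not> E p0 p4" "\<not> E p1 p3" "\<not> E p1 p4" "\<not> E p2 p4"
  shows "induced_path E [p0, p1, p2, p3, p4]"
proof -
  have "distinct [p0, p1, p2, p3, p4]"
    using assms by simp metis
  moreover have "\<forall>i<5. \<forall>j<5. E ([p0, p1, p2, p3, p4] ! i) ([p0, p1, p2, p3, p4] ! j)
      \<longleftrightarrow> i = Suc j \<or> j = Suc i"
    using assms by (auto simp: less_Suc_eq numeral_eq_Suc)
  ultimately show ?thesis
    unfolding induced_path_def by simp
qed

lemma H_free_P1_Pn_imp_no_induced_path:
  assumes "graph V E"
    and "H_free (dunion_V (path_V 1) (path_V n)) (dunion_E path_E path_E) V E"
    and "length ps = n" "set ps \<subseteq> V" "v \<in> V" "v \<notin> set ps"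
    and "\<forall>p\<in>set ps. \<not> E v p"
  shows "\<not> induced_path E ps"
proof
  assume path: "induced_path E ps"
  have sym: "\<And>x y. E x y \<Longrightarrow> E y x" and irrefl: "\<And>x. \<not> E x x"
    using assms(1) unfolding graph_def by blast+
  have isolated: "\<not> E v (ps ! i) \<and> \<not> E (ps ! i) v" if "i < n" for i
    using assms(3,7) sym that by (metis nth_mem)
  define f :: "nat + nat \<Rightarrow> _" where "f = case_sum (\<lambda>_. v) (\<lambda>i. ps ! i)"
  have VH: "dunion_V (path_V 1) (path_V n) = {Inl 0} \<union> Inr ` {..<n}"
    unfolding dunion_V_def path_V_def by auto
  have "induced_copy (dunion_V (path_V 1) (path_V n)) (dunion_E path_E path_E) V E"
    unfolding induced_copy_def VH
  proof (intro exI[of _ f] conjI)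
    show "inj_on f ({Inl 0} \<union> Inr ` {..<n})"
      using path assms(3,6) by (auto simp: inj_on_def f_def induced_path_def nth_eq_iff_index_eq)
    show "f ` ({Inl 0} \<union> Inr ` {..<n}) \<subseteq> V"
      using assms(3-5) by (auto simp: f_def)
    show "\<forall>x\<in>{Inl 0} \<union> Inr ` {..<n}. \<forall>y\<in>{Inl 0} \<union> Inr ` {..<n}.
        dunion_E path_E path_E x y = E (f x) (f y)"
      using path isolated irrefl assms(3)
      by (auto simp: f_def induced_path_def path_E_def)
  qed
  then show False
    using assms(2) unfolding H_free_def by blast
qed

lemma connected_set_has_neighbour:
  assumes "connected_set E S" "x \<in> S" "y \<in> S" "x \<noteq> y"
  shows "\<exists>w\<in>S. E x w"
proof -
  have "(\<lambda>a b. a \<in> S \<and> b \<in> S \<and> E a b)\<^sup>*\<^sup>* x y"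
    using assms unfolding connected_set_def by blast
  then show ?thesis
    using assms(4) by (cases rule: converse_rtranclpE) auto
qed

lemma connected_set_radius_two:
  assumes sym: "\<And>x y. E x y \<Longrightarrow> E y x" and "c \<in> T"
    and near: "\<And>t. t \<in> T \<Longrightarrow> t = c \<or> E t c \<or> (\<exists>d\<in>T. E t d \<and> E d c)"
  shows "connected_set E T"
proof -
  let ?R = "\<lambda>a b. a \<in> T \<and> b \<in> T \<and> E a b"
  have to_c: "?R\<^sup>*\<^sup>* t c \<and> ?R\<^sup>*\<^sup>* c t" if "t \<in> T" for t
    using near[OF that]
  proof (elim disjE bexE conjE)
    fix d assume "d \<in> T" "E t d" "E d c"
    then have "?R\<^sup>*\<^sup>* t d" "?R\<^sup>*\<^sup>* d c" "?R\<^sup>*\<^sup>* c d" "?R\<^sup>*\<^sup>* d t"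
      using \<open>t \<in> T\<close> \<open>c \<in> T\<close> sym by (simp_all add: r_into_rtranclp)
    then show ?thesis
      by (meson rtranclp_trans)
  qed (use \<open>t \<in> T\<close> \<open>c \<in> T\<close> sym in \<open>auto intro: r_into_rtranclp\<close>)
  show ?thesis
    unfolding connected_set_def using \<open>c \<in> T\<close> to_c by (meson empty_iff rtranclp_trans)
qed

lemma witness_structure_not_adjacent:
  assumes "witness_structure V E k W" "i \<in> {1..k}" "j \<in> {1..k}"
    and "i \<noteq> j" "i \<noteq> Suc j" "j \<noteq> Suc i" "x \<in> W i" "y \<in> W j"
  shows "\<not> E x y"
  using assms unfolding witness_structure_def by blast

lemma witness_structure_disjoint:
  assumes "witness_structure V E k W" "i \<in> {1..k}" "j \<in> {1..k}" "i \<noteq> j"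
  shows "W i \<inter> W j = {}"
  using assms unfolding witness_structure_def by blast

lemma witness_structure_adjacent:
  assumes "witness_structure V E k W" "i \<in> {1..k}" "Suc i \<in> {1..k}"
  shows "\<exists>x\<in>W i. \<exists>y\<in>W (Suc i). E x y"
  using assms unfolding witness_structure_def by auto

lemma witness_structure_subset:
  assumes "witness_structure V E k W" "i \<in> {1..k}"
  shows "W i \<subseteq> V"
  using assms unfolding witness_structure_def by blast

lemma witness_structure_far_from_first_two:
  assumes "graph V E" "k \<ge> 4"
    and W: "witness_structure V E k W" "W 1 = {u}" "W k = {v}"
    and "p \<in> insert u (W 2)"
  shows "p \<noteq> v \<and> \<not> E v p"
proof -
  have indices: "1 \<in> {1..k}" "2 \<in> {1..k}" "k \<in> {1..k}"
    using assms(2) by auto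
  have "p \<in> W 1 \<union> W 2"
    using assms(6) W(2) by blast
  then show ?thesis
    using witness_structure_disjoint[OF W(1) indices(3,1)]
      witness_structure_disjoint[OF W(1) indices(3,2)]
      witness_structure_not_adjacent[OF W(1) indices(3,1), of v p]
      witness_structure_not_adjacent[OF W(1) indices(3,2), of v p] W(3) assms(2)
    by auto
qed

lemma witness_structure_nbhd_subset:
  assumes "graph V E" "witness_structure V E k W" "W 1 = {u}"
  shows "nbhd V E u \<subseteq> W 2"
proof
  fix w assume "w \<in> nbhd V E u"
  then have "w \<in> V" "E u w"
    unfolding nbhd_def by auto
  then obtain j where j: "j \<in> {1..k}" "w \<in> W j"
    using assms(2) unfolding witness_structure_def by blast
  have "j \<noteq> 1"
    using assms(1,3) j \<open>E u w\<close> unfolding graph_def by auto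
  then have "j = 2"
    using witness_structure_not_adjacent[OF assms(2), of 1 j u w] assms(3) j \<open>E u w\<close>
    by fastforce
  then show "w \<in> W 2"
    using j by simp
qed

locale independent_nbhd_P5_free =
  fixes E :: "'a \<Rightarrow> 'a \<Rightarrow> bool" and u :: 'a and N M :: "'a set"
  assumes sym: "\<And>x y. E x y \<Longrightarrow> E y x" and irrefl: "\<And>x. \<not> E x x"
    and finite_N: "finite N" and finite_M: "finite M"
    and independent_N: "independent E N" and N_nonempty: "N \<noteq> {}"
    and connected_N_M: "connected_set E (N \<union> M)"
    and adjacent_N: "\<And>x. x \<in> N \<Longrightarrow> E u x"
    and not_adjacent_M: "\<And>m. m \<in> M \<Longrightarrow> \<not> E u m"
    and P5_free: "\<And>ps. length ps = 5 \<Longrightarrow> set ps \<subseteq> insert u (N \<union> M) \<Longrightarrow> \<not> induced_path E ps"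
begin

lemma not_adjacent_N: "x \<in> N \<Longrightarrow> y \<in> N \<Longrightarrow> \<not> E x y"
  using independent_N unfolding independent_def by blast

lemma neighbour_in_M:
  assumes "y \<in> N" "N \<noteq> {y}"
  shows "\<exists>q\<in>M. E y q"
proof -
  obtain y' where "y' \<in> N" "y' \<noteq> y"
    using assms N_nonempty by blast
  then obtain w where "w \<in> N \<union> M" "E y w"
    using connected_set_has_neighbour[OF connected_N_M, of y y'] assms(1) by blast
  then show ?thesis
    using not_adjacent_N assms(1) by blast
qed

lemma adjacent_if_crossing:
  assumes "a \<in> M" "q \<in> M" "x \<in> N" "y \<in> N"
    and "E a x" "E q y" "\<not> E a y" "\<not> E q x"
  shows "E a q"
proof (rule ccontr)
  assume "\<not> E a q"
  then have "induced_path E [a, x, u, y, q]"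
    using assms sym irrefl adjacent_N not_adjacent_M not_adjacent_N
    by (intro induced_path_5I) blast+
  then show False
    using P5_free[of "[a, x, u, y, q]"] assms by simp
qed

lemma dominated_by_adjacent_pair:
  assumes "q \<in> M" "a \<in> M" "x \<in> N" "z \<in> N"
    and "E q a" "E a x" "\<not> E q x"
  shows "E a z \<or> E q z"
proof (rule ccontr)
  assume "\<not> (E a z \<or> E q z)"
  then have "induced_path E [q, a, x, u, z]"
    using assms sym irrefl adjacent_N not_adjacent_M not_adjacent_N
    by (intro induced_path_5I) blast+
  then show False
    using P5_free[of "[q, a, x, u, z]"] assms by simp
qed

lemma connected_by_two:
  "\<exists>S\<subseteq>M. card S \<le> 2 \<and> connected_set E (N \<union> S)"
proof (cases "\<exists>y. N = {y}")
  case True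
  then show ?thesis
    by (intro exI[of _ "{}"]) (auto simp: connected_set_def)
next
  case not_singleton: False
  define degree where "degree a = card {x \<in> N. E a x}" for a
  have "M \<noteq> {}"
    using neighbour_in_M not_singleton N_nonempty by blast
  then have "Max (degree ` M) \<in> degree ` M"
    using finite_M by simp
  then obtain a where a: "a \<in> M" "Max (degree ` M) = degree a"
    by (rule imageE)
  have a_max: "degree b \<le> degree a" if "b \<in> M" for b
    using a(2) finite_M that by (metis Max_ge finite_imageI imageI)
  show ?thesis
  proof (cases "\<forall>z\<in>N. E a z")
    case True
    have "connected_set E (N \<union> {a})"
    proof (rule connected_set_radius_two[OF sym, where c = a])
      show "a \<in> N \<union> {a}" by simp
      fix t assume "t \<in> N \<union> {a}"
      then show "t = a \<or> E t a \<or> (\<exists>d\<in>N \<union> {a}. E t d \<and> E d a)"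
        using True sym by blast
    qed
    then show ?thesis
      using a by (intro exI[of _ "{a}"]) auto
  next
    case False
    then obtain y where y: "y \<in> N" "\<not> E a y" by blast
    then obtain q where q: "q \<in> M" "E y q"
      using neighbour_in_M not_singleton by blast
    have "\<exists>x\<in>N. E a x \<and> \<not> E q x"
    proof (rule ccontr)
      assume "\<not> (\<exists>x\<in>N. E a x \<and> \<not> E q x)"
      then have "{x \<in> N. E a x} \<subset> {x \<in> N. E q x}"
        using y q sym by blast
      then have "degree a < degree q"
        unfolding degree_def using finite_N by (simp add: psubset_card_mono)
      with a_max[OF q(1)] show False by simp
    qed
    then obtain x where x: "x \<in> N" "E a x" "\<not> E q x" by blast
    have "E a q"
      using adjacent_if_crossing[OF a(1) q(1) x(1) y(1)] x y q sym by blast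
    have "connected_set E (N \<union> {a, q})"
    proof (rule connected_set_radius_two[OF sym, where c = a])
      show "a \<in> N \<union> {a, q}" by simp
      fix t assume "t \<in> N \<union> {a, q}"
      then show "t = a \<or> E t a \<or> (\<exists>d\<in>N \<union> {a, q}. E t d \<and> E d a)"
        using dominated_by_adjacent_pair[OF q(1) a(1) x(1), of t] \<open>E a q\<close> x sym by blast
    qed
    then show ?thesis
      using a q by (intro exI[of _ "{a, q}"]) (auto simp: card_insert_if)
  qed
qed

end

lemma witness_structure_independent_nbhd_P5_free:
  assumes "graph V E" "k \<ge> 4"
    and "H_free (dunion_V (path_V 1) (path_V 5)) (dunion_E path_E path_E) V E"
    and W: "witness_structure V E k W" "W 1 = {u}" "W k = {v}"
    and independent: "independent E (nbhd V E u)"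
  shows "independent_nbhd_P5_free E u (nbhd V E u) (W 2 - nbhd V E u)"
proof -
  have sym: "\<And>x y. E x y \<Longrightarrow> E y x" and irrefl: "\<And>x. \<not> E x x" and "finite V"
    using assms(1) unfolding graph_def by blast+
  let ?N = "nbhd V E u"
  have indices: "1 \<in> {1..k}" "2 \<in> {1..k}" "k \<in> {1..k}"
    using assms(2) by auto
  have "u \<in> V" "v \<in> V" "W 2 \<subseteq> V"
    using witness_structure_subset[OF W(1)] indices W(2,3) by blast+
  have "connected_set E (W 2)"
    using W(1) indices(2) unfolding witness_structure_def by blast
  have N_W2: "?N \<subseteq> W 2"
    by (rule witness_structure_nbhd_subset[OF assms(1) W(1,2)])
  have "\<exists>x\<in>W 1. \<exists>y\<in>W 2. E x y"
    using witness_structure_adjacent[OF W(1), of 1] indices by (simp add: numeral_2_eq_2)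
  then have "?N \<noteq> {}"
    using \<open>W 2 \<subseteq> V\<close> unfolding W(2) nbhd_def by blast
  have P5_free: "\<not> induced_path E ps"
    if "length ps = 5" "set ps \<subseteq> insert u (?N \<union> (W 2 - ?N))" for ps
  proof (rule H_free_P1_Pn_imp_no_induced_path[OF assms(1,3) that(1) _ \<open>v \<in> V\<close>])
    have "set ps \<subseteq> insert u (W 2)"
      using that(2) N_W2 by blast
    then show "set ps \<subseteq> V" "v \<notin> set ps" "\<forall>p\<in>set ps. \<not> E v p"
      using witness_structure_far_from_first_two[OF assms(1,2) W] \<open>u \<in> V\<close> \<open>W 2 \<subseteq> V\<close>
      by blast+
  qed
  show ?thesis
  proof
    show "finite ?N" "finite (W 2 - ?N)"
      using N_W2 \<open>W 2 \<subseteq> V\<close> \<open>finite V\<close> by (auto intro: finite_subset)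
    show "connected_set E (?N \<union> (W 2 - ?N))"
      using N_W2 \<open>connected_set E (W 2)\<close> by (simp add: Un_absorb1)
  qed (use sym irrefl independent \<open>?N \<noteq> {}\<close> \<open>W 2 \<subseteq> V\<close> P5_free in \<open>auto simp: nbhd_def\<close>)
qed

theorem lemma17:
  fixes V :: "'a set" and E :: "'a \<Rightarrow> 'a \<Rightarrow> bool" and k :: nat and u v :: 'a
  assumes "graph V E"
    and "k \<ge> 4"
    and "H_free (dunion_V (path_V 1) (path_V 5)) (dunion_E path_E path_E) V E"
    and "suitable V E k u v"
    and "independent E (nbhd V E u)"
  shows "\<exists>W. witness_structure V E k W \<and> W 1 = {u} \<and> W k = {v} \<and>
           (\<exists>S. S \<subseteq> W 2 - nbhd V E u \<and> card S \<le> 2 \<and>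
                connected_set E (nbhd V E u \<union> S))"
proof -
  obtain W where W: "witness_structure V E k W" "W 1 = {u}" "W k = {v}"
    using assms(4) unfolding suitable_def by blast
  then interpret independent_nbhd_P5_free E u "nbhd V E u" "W 2 - nbhd V E u"
    using witness_structure_independent_nbhd_P5_free[OF assms(1,2,3) _ _ _ assms(5)] by blast
  show ?thesis
    using connected_by_two W by blast
qed

end
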